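(* The complex surface $F=\{(z_1,z_2,z_3)\in\mathbb{C}^3: z_1+z_3+z_1z_2z_3=1\}$ is simply connected. *)

theory Defs
  imports "HOL-Analysis.Analysis"
begin

definition surfaceF :: "(complex \<times> complex \<times> complex) set" where
  "surfaceF = {(z1, z2, z3). z1 + z3 + z1 * z2 * z3 = 1}"

end

theory Submission
  imports Defs
begin

text \<open>
  Write points of \<open>F\<close> as \<open>(x, b, y)\<close> and put \<open>A = 1 + b x\<close>; the equation of \<open>F\<close> becomes
  \<open>A y = 1 - x\<close>. Three open pieces cover \<open>F\<close>, and each is homeomorphic, by projection to
  two suitable coordinates, to a simply connected region of \<open>\<complex>\<^sup>2\<close>:
  \<open>U = {x \<notin> (-\<infinity>, 0]}\<close> via \<open>(A, y)\<close>, onto the star-shaped region \<open>A y \<notin> [1, \<infinity>)\<close>;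
  \<open>V = {x \<notin> [1, \<infinity>), A \<notin> (-\<infinity>, 0]}\<close> via \<open>(x, b)\<close>, again onto a star-shaped region;
  \<open>W = {x, y \<notin> [0, \<infinity>)}\<close> via \<open>(x, y)\<close>, onto a product of slit planes.
  In the coordinates \<open>(x, A)\<close>, \<open>U \<inter> V\<close> is a product of slit planes, and \<open>(U \<union> V) \<inter> W\<close> is the part
  of \<open>W\<close> where \<open>x\<close> and \<open>y\<close> are not both real; both are path connected. Two applications of the
  van Kampen theorem for simply connected spaces finish the proof.
\<close>

section \<open>Van Kampen for simply connected spaces\<close>

lemma path_subdivision_open_cover:
  fixes U V :: "'a::topological_space set"
  assumes "openin (top_of_set (U \<union> V)) U" "openin (top_of_set (U \<union> V)) V"
    and "path p" "path_image p \<subseteq> U \<union> V"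
  obtains N :: nat where "N > 0"
    "\<And>k. k < N \<Longrightarrow> p ` {real k / N .. real (Suc k) / N} \<subseteq> U \<or> p ` {real k / N .. real (Suc k) / N} \<subseteq> V"
proof -
  have cont: "continuous_on {0..1} p" and into: "p \<in> {0..1} \<rightarrow> U \<union> V"
    using assms(3,4) by (auto simp: path_def path_image_def)
  obtain OU where OU: "open OU" "{0..1} \<inter> p -` U = {0..1} \<inter> OU"
    using continuous_openin_preimage[OF cont into assms(1)] by (auto simp: openin_open)
  obtain OV where OV: "open OV" "{0..1} \<inter> p -` V = {0..1} \<inter> OV"
    using continuous_openin_preimage[OF cont into assms(2)] by (auto simp: openin_open)
  have inOU: "p t \<in> U \<longleftrightarrow> t \<in> OU" and inOV: "p t \<in> V \<longleftrightarrow> t \<in> OV" if "t \<in> {0..1}" for t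
    using that OU(2) OV(2) by blast+
  have cover: "{0..1::real} \<subseteq> \<Union>{OU, OV}"
    using into inOU inOV by fastforce
  obtain d where "0 < d" and d: "\<And>T. \<lbrakk>T \<subseteq> {0..1}; diameter T < d\<rbrakk> \<Longrightarrow> \<exists>B \<in> {OU, OV}. T \<subseteq> B"
    using Lebesgue_number_lemma[OF compact_Icc _ cover] OU(1) OV(1) by blast
  then obtain N :: nat where N: "N > 0" "inverse (real N) < d"
    using ex_inverse_of_nat_less by (metis of_nat_0_less_iff inverse_positive_iff_positive less_trans)
  show ?thesis
  proof (rule that[OF N(1)])
    fix k assume "k < N"
    let ?T = "{real k / N .. real (Suc k) / N}"
    have T01: "?T \<subseteq> {0..1}"
      using \<open>k < N\<close> by (auto simp: divide_le_eq_1 intro: order_trans)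
    have "diameter ?T = inverse (real N)"
      using N(1) by (simp add: divide_right_mono field_simps)
    then obtain B where "B \<in> {OU, OV}" "?T \<subseteq> B"
      using d[OF T01] N(2) by auto
    then show "p ` ?T \<subseteq> U \<or> p ` ?T \<subseteq> V"
      using T01 inOU inOV by blast
  qed
qed

lemma homotopic_join_into_subset:
  fixes A W X :: "'a::real_normed_vector set"
  assumes "simply_connected W" "path_connected A" "A \<subseteq> W" "W \<subseteq> X"
    and "path q" "path_image q \<subseteq> A" "path r" "path_image r \<subseteq> W"
    and "pathfinish q = pathstart r" "pathfinish r \<in> A"
  obtains s where "path s" "path_image s \<subseteq> A" "homotopic_paths X (q +++ r) s"
proof -
  have "pathstart r \<in> A"
    using assms(6,9) pathfinish_in_path_image by fastforce
  then obtain t where t: "path t" "path_image t \<subseteq> A" "pathstart t = pathstart r" "pathfinish t = pathfinish r"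
    using assms(2,10) unfolding path_connected_def by blast
  have "homotopic_paths W r t"
    using assms(1,3,7,8) t unfolding simply_connected_eq_homotopic_paths by blast
  then have "homotopic_paths X (q +++ r) (q +++ t)"
    using assms(3-6,9) by (intro homotopic_paths_join homotopic_paths_refl[THEN iffD2])
      (auto intro: homotopic_paths_subset)
  moreover have "path (q +++ t)" "path_image (q +++ t) \<subseteq> A"
    using assms(5,6,9) t by (auto simp: path_image_join)
  ultimately show ?thesis
    using that by blast
qed

text \<open>Invariant of the subdivision argument: a path through \<open>U \<inter> V\<close> followed by one piece.\<close>

definition homotopic_to_inter_join :: "'a::topological_space set \<Rightarrow> 'a set \<Rightarrow> (real \<Rightarrow> 'a) \<Rightarrow> bool" where
  "homotopic_to_inter_join U V g \<longleftrightarrow>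
     (\<exists>q r. path q \<and> path_image q \<subseteq> U \<inter> V \<and> path r \<and> (path_image r \<subseteq> U \<or> path_image r \<subseteq> V) \<and>
            pathfinish q = pathstart r \<and> homotopic_paths (U \<union> V) g (q +++ r))"

lemma homotopic_to_inter_join_piece:
  fixes U V :: "'a::real_normed_vector set"
  assumes "path r" "path_image r \<subseteq> U \<or> path_image r \<subseteq> V" "pathstart r \<in> U \<inter> V"
  shows "homotopic_to_inter_join U V r"
proof -
  let ?a = "pathstart r"
  have "homotopic_paths (U \<union> V) r (linepath ?a ?a +++ r)"
    using assms(1,2) homotopic_paths_lid[of r "U \<union> V"] by (auto intro: homotopic_paths_sym)
  then show ?thesis
    unfolding homotopic_to_inter_join_def using assms
    by (intro exI[of _ "linepath ?a ?a"] exI[of _ r]) auto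
qed

lemma homotopic_to_inter_join_homotopic:
  assumes "homotopic_to_inter_join U V g" "homotopic_paths (U \<union> V) g' g"
  shows "homotopic_to_inter_join U V g'"
  using assms homotopic_paths_trans unfolding homotopic_to_inter_join_def by blast

lemma homotopic_to_inter_join_append:
  fixes U V :: "'a::real_normed_vector set"
  assumes "simply_connected U" "simply_connected V" "path_connected (U \<inter> V)"
    and g: "homotopic_to_inter_join U V g"
    and r: "path r" "path_image r \<subseteq> U \<or> path_image r \<subseteq> V" "pathfinish g = pathstart r"
  shows "homotopic_to_inter_join U V (g +++ r)"
proof -
  let ?X = "U \<union> V"
  obtain q r0 W where q: "path q" "path_image q \<subseteq> U \<inter> V"
    and r0: "path r0" "path_image r0 \<subseteq> W" "pathfinish q = pathstart r0" and W: "W = U \<or> W = V"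
    and hg: "homotopic_paths ?X g (q +++ r0)"
    using g unfolding homotopic_to_inter_join_def by blast
  obtain W' where W': "W' = U \<or> W' = V" and rW': "path_image r \<subseteq> W'"
    using r(2) by blast
  have rX: "homotopic_paths ?X r r"
    using r(1) rW' W' by (auto intro: homotopic_paths_refl[THEN iffD2])
  have hgr: "homotopic_paths ?X (g +++ r) ((q +++ r0) +++ r)"
    using homotopic_paths_join[OF hg rX r(3)] .
  have r0_r: "pathfinish r0 = pathstart r"
    using homotopic_paths_imp_pathfinish[OF hg] r(3) r0(3) by simp
  show ?thesis
  proof (cases "W' = W")
    case True
    have "homotopic_paths ?X ((q +++ r0) +++ r) (q +++ (r0 +++ r))"
      using q r0 r(1) rW' W r0_r True
      by (intro homotopic_paths_sym[OF homotopic_paths_assoc]) auto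
    moreover have "path (r0 +++ r)" "path_image (r0 +++ r) \<subseteq> W"
      using r0 r(1) rW' r0_r True by (auto simp: path_image_join)
    ultimately show ?thesis
      unfolding homotopic_to_inter_join_def using q r0(3) W
      by (intro exI[of _ q] exI[of _ "r0 +++ r"]) (auto intro: homotopic_paths_trans[OF hgr])
  next
    case False
    \<comment> \<open>\<open>r0\<close> ends in both pieces, hence in \<open>U \<inter> V\<close>, so it can be pushed into \<open>U \<inter> V\<close>.\<close>
    have "pathfinish r0 \<in> W \<inter> W'"
      using r0(2) rW' r0_r r(1) pathfinish_in_path_image[of r0] pathstart_in_path_image[of r] by auto
    then have "pathfinish r0 \<in> U \<inter> V"
      using W W' False by blast
    then obtain s where s: "path s" "path_image s \<subseteq> U \<inter> V" "homotopic_paths ?X (q +++ r0) s"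
      using homotopic_join_into_subset[of W "U \<inter> V" ?X q r0] assms(1-3) q r0 W by blast
    have "homotopic_paths ?X ((q +++ r0) +++ r) (s +++ r)"
      using homotopic_paths_join[OF s(3) rX] r0_r by simp
    moreover have "pathfinish s = pathstart r"
      using homotopic_paths_imp_pathfinish[OF s(3)] r0_r by simp
    ultimately show ?thesis
      unfolding homotopic_to_inter_join_def using s r
      by (intro exI[of _ s] exI[of _ r]) (auto intro: homotopic_paths_trans[OF hgr])
  qed
qed

lemma homotopic_to_inter_join_finish:
  fixes U V :: "'a::real_normed_vector set"
  assumes "simply_connected U" "simply_connected V" "path_connected (U \<inter> V)"
    and g: "homotopic_to_inter_join U V g" and "pathfinish g \<in> U \<inter> V"
  obtains s where "path s" "path_image s \<subseteq> U \<inter> V" "homotopic_paths (U \<union> V) g s"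
proof -
  obtain q r W where q: "path q" "path_image q \<subseteq> U \<inter> V"
    and r: "path r" "path_image r \<subseteq> W" "pathfinish q = pathstart r" and W: "W = U \<or> W = V"
    and hg: "homotopic_paths (U \<union> V) g (q +++ r)"
    using g unfolding homotopic_to_inter_join_def by blast
  have "pathfinish r \<in> U \<inter> V"
    using homotopic_paths_imp_pathfinish[OF hg] assms(5) by simp
  then obtain s where "path s" "path_image s \<subseteq> U \<inter> V" "homotopic_paths (U \<union> V) (q +++ r) s"
    using homotopic_join_into_subset[of W "U \<inter> V" "U \<union> V" q r] assms(1-3) q r W by blast
  then show ?thesis
    using that homotopic_paths_trans[OF hg] by blast
qed

lemma homotopic_path_into_inter:
  fixes U V :: "'a::real_normed_vector set"
  assumes "openin (top_of_set (U \<union> V)) U" "openin (top_of_set (U \<union> V)) V"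
    and "simply_connected U" "simply_connected V" "path_connected (U \<inter> V)"
    and p: "path p" "path_image p \<subseteq> U \<union> V" "pathstart p \<in> U \<inter> V" "pathfinish p \<in> U \<inter> V"
  obtains q where "path q" "path_image q \<subseteq> U \<inter> V" "homotopic_paths (U \<union> V) p q"
proof -
  obtain N :: nat where "N > 0" and pieces:
    "\<And>k. k < N \<Longrightarrow> p ` {real k / N .. real (Suc k) / N} \<subseteq> U \<or> p ` {real k / N .. real (Suc k) / N} \<subseteq> V"
    using path_subdivision_open_cover[OF assms(1,2) p(1,2)] by blast
  let ?t = "\<lambda>k. real k / N"
  have t01: "?t k \<in> {0..1}" if "k \<le> N" for k
    using that \<open>N > 0\<close> by (simp add: divide_le_eq_1)
  have t_mono: "?t k \<le> ?t (Suc k)" for k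
    by (simp add: divide_right_mono)
  have piece: "path (subpath (?t k) (?t (Suc k)) p)"
    "path_image (subpath (?t k) (?t (Suc k)) p) \<subseteq> U \<or> path_image (subpath (?t k) (?t (Suc k)) p) \<subseteq> V"
    if "k < N" for k
    using that p(1) t01 pieces[OF that] t_mono by (auto simp: path_image_subpath)
  have "k \<le> N \<Longrightarrow> homotopic_to_inter_join U V (subpath 0 (?t k) p)" if "1 \<le> k" for k
    using that
  proof (induction k rule: dec_induct)
    case base
    show ?case
      using homotopic_to_inter_join_piece[OF piece[OF \<open>N > 0\<close>]] p(3)
      by (simp add: pathstart_def subpath_def)
  next
    case (step k)
    then have "k < N" and IH: "homotopic_to_inter_join U V (subpath 0 (?t k) p)"
      by simp_all
    have "homotopic_to_inter_join U V (subpath 0 (?t k) p +++ subpath (?t k) (?t (Suc k)) p)"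
      using homotopic_to_inter_join_append[OF assms(3-5) IH piece[OF \<open>k < N\<close>]] by simp
    moreover have "homotopic_paths (U \<union> V) (subpath 0 (?t (Suc k)) p)
                     (subpath 0 (?t k) p +++ subpath (?t k) (?t (Suc k)) p)"
      using homotopic_join_subpaths1[OF p(1,2), of 0 "?t k" "?t (Suc k)"] t01 step.prems t_mono
      by (auto intro: homotopic_paths_sym)
    ultimately show ?case
      by (rule homotopic_to_inter_join_homotopic)
  qed
  from this[of N] have "homotopic_to_inter_join U V p"
    using \<open>N > 0\<close> by simp
  then show ?thesis
    using homotopic_to_inter_join_finish[OF assms(3-5) _ p(4)] that by blast
qed

lemma simply_connected_Un:
  fixes U V :: "'a::real_normed_vector set"
  assumes "openin (top_of_set (U \<union> V)) U" "openin (top_of_set (U \<union> V)) V"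
    and sU: "simply_connected U" and "simply_connected V"
    and "path_connected (U \<inter> V)" and "U \<inter> V \<noteq> {}"
  shows "simply_connected (U \<union> V)"
  unfolding simply_connected_eq_contractible_loop_some
proof (intro conjI allI impI)
  let ?X = "U \<union> V"
  show pX: "path_connected ?X"
    using assms(3,4,6) by (intro path_connected_Un simply_connected_imp_path_connected)
  obtain c where c: "c \<in> U \<inter> V"
    using assms(6) by blast
  fix p assume p: "path p \<and> path_image p \<subseteq> ?X \<and> pathfinish p = pathstart p"
  obtain g where g: "path g" "path_image g \<subseteq> ?X" "pathstart g = c" "pathfinish g = pathstart p"
    using pX c p pathstart_in_path_image unfolding path_connected_def by blast
  let ?L = "g +++ p +++ reversepath g"
  obtain q where q: "path q" "path_image q \<subseteq> U \<inter> V" "homotopic_paths ?X ?L q"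
    using homotopic_path_into_inter[OF assms(1-5), of ?L] g p c by (auto simp: path_image_join)
  have ends: "pathstart q = c" "pathfinish q = c"
    using homotopic_paths_imp_pathstart[OF q(3)] homotopic_paths_imp_pathfinish[OF q(3)] g by auto
  have "homotopic_loops ?X p ?L"
    using homotopic_loops_conjugate[of g p ?X] g p by (simp add: homotopic_loops_sym_eq)
  moreover have "homotopic_loops ?X ?L q"
    using q(3) ends g by (auto intro: homotopic_paths_imp_homotopic_loops)
  moreover have "homotopic_loops U q (linepath c c)"
    using sU q ends c unfolding simply_connected_eq_contractible_loop_any by auto
  then have "homotopic_loops ?X q (linepath c c)"
    by (rule homotopic_loops_subset) blast
  ultimately show "\<exists>a. a \<in> ?X \<and> homotopic_loops ?X p (linepath a a)"
    using c by (blast intro: homotopic_loops_trans)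
qed

lemma image_eq_by_right_inverse:
  assumes "h ` S \<subseteq> T" "k ` T \<subseteq> S" "\<And>y. y \<in> T \<Longrightarrow> h (k y) = y"
  shows "h ` S = T"
  using assms by (metis image_subset_iff subset_antisym subsetI rev_image_eqI)

lemma simply_connected_by_right_inverse:
  assumes "simply_connected S" "continuous_on S h" "h ` S \<subseteq> T"
    and "continuous_on T k" "k ` T \<subseteq> S" "\<And>y. y \<in> T \<Longrightarrow> h (k y) = y"
  shows "simply_connected T"
  using simply_connected_retraction_gen[OF assms(1,2) image_eq_by_right_inverse[OF assms(3,5,6)] assms(4)]
    assms(5,6) by blast

lemma path_connected_by_right_inverse:
  assumes "path_connected S" "continuous_on S h" "h ` S \<subseteq> T"
    and "k ` T \<subseteq> S" "\<And>y. y \<in> T \<Longrightarrow> h (k y) = y"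
  shows "path_connected T"
  using path_connected_continuous_image[OF assms(2,1)] image_eq_by_right_inverse[OF assms(3-5)] by simp

lemma closed_segment_0_subset_slot_right:
  "0 < c \<Longrightarrow> w \<notin> complex_of_real ` {c..} \<Longrightarrow> closed_segment 0 w \<subseteq> - complex_of_real ` {c..}"
  using starlike_slotted_complex_plane_right_aux[of w c 0] by simp

lemma closed_segment_0_subset_slot_left:
  "c < 0 \<Longrightarrow> w \<notin> complex_of_real ` {..c} \<Longrightarrow> closed_segment 0 w \<subseteq> - complex_of_real ` {..c}"
  using starlike_slotted_complex_plane_left_aux[of w c 0] by simp

lemma starlike_mult_constraint:
  fixes A B :: "complex set"
  assumes "0 \<in> A" "0 \<in> B"
    and A: "\<And>w. w \<in> A \<Longrightarrow> closed_segment 0 w \<subseteq> A"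
    and B: "\<And>w. w \<in> B \<Longrightarrow> closed_segment 0 w \<subseteq> B"
  shows "starlike {p. fst p \<in> A \<and> fst p * snd p \<in> B}"
  unfolding starlike_def
proof (intro bexI ballI subsetI)
  show "0 \<in> {p. fst p \<in> A \<and> fst p * snd p \<in> B}"
    using assms(1,2) by simp
  fix p z assume p: "p \<in> {p. fst p \<in> A \<and> fst p * snd p \<in> B}" and "z \<in> closed_segment 0 p"
  then obtain u :: real where u: "0 \<le> u" "u \<le> 1" "z = u *\<^sub>R p"
    by (auto simp: closed_segment_def)
  have "fst z = u *\<^sub>R fst p" "fst z * snd z = (u * u) *\<^sub>R (fst p * snd p)"
    using u(3) by (simp_all add: scaleR_conv_of_real)
  moreover have "0 \<le> u * u" "u * u \<le> 1"
    using u(1,2) by (simp_all add: mult_le_one)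
  ultimately have "fst z \<in> closed_segment 0 (fst p)" "fst z * snd z \<in> closed_segment 0 (fst p * snd p)"
    using u(1,2) unfolding closed_segment_def by force+
  then show "z \<in> {p. fst p \<in> A \<and> fst p * snd p \<in> B}"
    using A B p by blast
qed

lemma one_minus_mem_slot_iff:
  "1 - w \<in> complex_of_real ` {1..} \<longleftrightarrow> w \<in> complex_of_real ` {..0}"
  "1 - w \<in> complex_of_real ` {..0} \<longleftrightarrow> w \<in> complex_of_real ` {1..}"
  by (auto simp: complex_slot_left_eq complex_slot_right_eq)

lemma one_plus_mem_slot_iff: "1 + w \<in> complex_of_real ` {..0} \<longleftrightarrow> w \<in> complex_of_real ` {..-1}"
  by (auto simp: complex_slot_left_eq)

lemma mult_eq_pos_real_slot_iff:
  assumes "A * y = complex_of_real s" "0 < s"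
  shows "A \<in> complex_of_real ` {..0} \<longleftrightarrow> y \<in> complex_of_real ` {..0}"
proof -
  have *: "v \<in> complex_of_real ` {..0}" if uv: "u * v = complex_of_real s" and u: "u \<in> complex_of_real ` {..0}" for u v
  proof -
    obtain a where a: "u = complex_of_real a" "a \<le> 0"
      using u by blast
    with uv assms(2) have "a \<noteq> 0"
      by auto
    with a uv have "v = complex_of_real (s / a)"
      by (simp add: field_simps)
    moreover have "s / a \<le> 0"
      using a(2) assms(2) by (simp add: divide_nonneg_nonpos)
    ultimately show ?thesis
      by (metis atMost_iff rev_image_eqI)
  qed
  show ?thesis
    using *[of A y] *[of y A] assms(1) by (auto simp: mult.commute)
qed

lemma path_connected_slotted_pairs_not_both_real:
  "path_connected {(x, y). x \<notin> complex_of_real ` {0..} \<and> y \<notin> complex_of_real ` {0..} \<and> (Im x \<noteq> 0 \<or> Im y \<noteq> 0)}"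
proof -
  let ?S = "- complex_of_real ` {0..}" and ?H = "{z. 0 < Im z}" and ?L = "{z. Im z < 0}"
  have eq: "{(x, y). x \<notin> complex_of_real ` {0..} \<and> y \<notin> complex_of_real ` {0..} \<and> (Im x \<noteq> 0 \<or> Im y \<noteq> 0)}
        = ((?H \<times> ?S \<union> ?S \<times> ?H) \<union> ?L \<times> ?S) \<union> ?S \<times> ?L"
    by (auto simp: complex_slot_right_eq)
  have S: "path_connected ?S"
    by (intro simply_connected_imp_path_connected simply_connected_slotted_complex_plane_right)
  have H: "path_connected ?H" "path_connected ?L"
    by (intro convex_imp_path_connected convex_halfspace_Im_gt convex_halfspace_Im_lt)+
  have "\<i> \<in> ?S" "- \<i> \<in> ?S"
    by (auto simp: complex_slot_right_eq)
  then have "(\<i>, \<i>) \<in> (?H \<times> ?S) \<inter> (?S \<times> ?H)" "(- \<i>, \<i>) \<in> (?H \<times> ?S \<union> ?S \<times> ?H) \<inter> (?L \<times> ?S)"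
    "(\<i>, - \<i>) \<in> (?H \<times> ?S \<union> ?S \<times> ?H \<union> ?L \<times> ?S) \<inter> (?S \<times> ?L)"
    by auto
  then show ?thesis
    unfolding eq by (intro path_connected_Un path_connected_Times S H) blast+
qed

section \<open>The surface and its cover\<close>

lemma surfaceF_iff: "(x, b, y) \<in> surfaceF \<longleftrightarrow> (1 + b * x) * y = 1 - x"
  by (auto simp: surfaceF_def algebra_simps)

lemma surfaceF_iff_mid:
  assumes "x \<noteq> 0" "y \<noteq> 0"
  shows "(x, b, y) \<in> surfaceF \<longleftrightarrow> b = (1 - x - y) / (x * y)"
  using assms by (auto simp: surfaceF_def field_simps)

definition patchU :: "(complex \<times> complex \<times> complex) set" where
  "patchU = {(x, b, y) \<in> surfaceF. x \<notin> complex_of_real ` {..0}}"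

definition patchV :: "(complex \<times> complex \<times> complex) set" where
  "patchV = {(x, b, y) \<in> surfaceF. x \<notin> complex_of_real ` {1..} \<and> 1 + b * x \<notin> complex_of_real ` {..0}}"

definition patchW :: "(complex \<times> complex \<times> complex) set" where
  "patchW = {(x, b, y) \<in> surfaceF. x \<notin> complex_of_real ` {0..} \<and> y \<notin> complex_of_real ` {0..}}"

lemma openin_patches:
  "openin (top_of_set surfaceF) patchU" "openin (top_of_set surfaceF) patchV"
  "openin (top_of_set surfaceF) patchW"
proof -
  have slot: "open (- complex_of_real ` {..c})" "open (- complex_of_real ` {c..})" for c
    by (simp_all add: open_Compl closed_slot_left closed_slot_right)
  have U: "patchU = surfaceF \<inter> fst -` (- complex_of_real ` {..0})"
    by (auto simp: patchU_def)
  show "openin (top_of_set surfaceF) patchU"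
    unfolding U by (intro openin_open_Int continuous_open_vimage slot continuous_intros)
  have V: "patchV = surfaceF \<inter> (fst -` (- complex_of_real ` {1..}) \<inter>
                 (\<lambda>z. 1 + fst (snd z) * fst z) -` (- complex_of_real ` {..0}))"
    by (auto simp: patchV_def)
  show "openin (top_of_set surfaceF) patchV"
    unfolding V by (intro openin_open_Int open_Int continuous_open_vimage slot continuous_intros)
  have W: "patchW = surfaceF \<inter> (fst -` (- complex_of_real ` {0..}) \<inter>
                 (\<lambda>z. snd (snd z)) -` (- complex_of_real ` {0..}))"
    by (auto simp: patchW_def)
  show "openin (top_of_set surfaceF) patchW"
    unfolding W by (intro openin_open_Int open_Int continuous_open_vimage slot continuous_intros)
qed

lemma mem_patchV_if_nonpos_real:
  assumes "(x, b, y) \<in> surfaceF" "x \<in> complex_of_real ` {..0}"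
  shows "(x, b, y) \<in> patchV \<longleftrightarrow> y \<notin> complex_of_real ` {..0}"
proof -
  obtain r where r: "x = complex_of_real r" "r \<le> 0"
    using assms(2) by blast
  then have "(1 + b * x) * y = complex_of_real (1 - r)"
    using assms(1) by (simp add: surfaceF_iff)
  then have "1 + b * x \<in> complex_of_real ` {..0} \<longleftrightarrow> y \<in> complex_of_real ` {..0}"
    using r(2) by (intro mult_eq_pos_real_slot_iff[where s = "1 - r"]) auto
  moreover have "x \<notin> complex_of_real ` {1..}"
    using r by (auto simp: complex_slot_right_eq)
  ultimately show ?thesis
    using assms(1) by (simp add: patchV_def)
qed

lemma surfaceF_eq_patches: "surfaceF = (patchU \<union> patchV) \<union> patchW"
proof
  show "(patchU \<union> patchV) \<union> patchW \<subseteq> surfaceF"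
    by (auto simp: patchU_def patchV_def patchW_def)
  have "(x, b, y) \<in> patchW" if F: "(x, b, y) \<in> surfaceF" and "(x, b, y) \<notin> patchU" "(x, b, y) \<notin> patchV" for x b y
  proof -
    have x: "x \<in> complex_of_real ` {..0}"
      using that by (simp add: patchU_def)
    then have y: "y \<in> complex_of_real ` {..0}"
      using that mem_patchV_if_nonpos_real by blast
    have "x \<noteq> 0" "y \<noteq> 0"
      using F x y by (auto simp: surfaceF_iff complex_slot_left_eq)
    with x y show ?thesis
      using F by (auto simp: patchW_def complex_slot_left_eq complex_slot_right_eq complex_eq_iff)
  qed
  then show "surfaceF \<subseteq> (patchU \<union> patchV) \<union> patchW"
    by (metis UnCI prod_cases3 subsetI)
qed

lemma simply_connected_patchU: "simply_connected patchU"
proof (rule simply_connected_by_right_inverse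
    [where h = "\<lambda>(A, y). (1 - A * y, (A - 1) / (1 - A * y), y)" and k = "\<lambda>(x, b, y). (1 + b * x, y)"])
  let ?S = "{p :: complex \<times> complex. fst p * snd p \<notin> complex_of_real ` {1..}}"
  have "(0::complex) \<notin> complex_of_real ` {1..}"
    by (auto simp: complex_slot_right_eq)
  then have "starlike ?S"
    using starlike_mult_constraint[of UNIV "- complex_of_real ` {1..}"]
      closed_segment_0_subset_slot_right[of 1] by simp
  then show "simply_connected ?S"
    by (rule starlike_imp_simply_connected)
  have nz: "1 - w \<noteq> 0" if "w \<notin> complex_of_real ` {1..}" for w
    using that by (auto simp: complex_slot_right_eq)
  show "continuous_on ?S (\<lambda>(A, y). (1 - A * y, (A - 1) / (1 - A * y), y))"
    using nz by (auto simp: case_prod_unfold intro!: continuous_intros)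
  show "continuous_on patchU (\<lambda>(x, b, y). (1 + b * x, y))"
    by (auto simp: case_prod_unfold intro!: continuous_intros)
  have "(1 - A * y, (A - 1) / (1 - A * y), y) \<in> patchU" if "A * y \<notin> complex_of_real ` {1..}" for A y
    using that nz[OF that] by (simp add: patchU_def surfaceF_iff one_minus_mem_slot_iff field_simps)
  then show "(\<lambda>(A, y). (1 - A * y, (A - 1) / (1 - A * y), y)) ` ?S \<subseteq> patchU"
    by auto
  have "(1 + b * x) * y \<notin> complex_of_real ` {1..}" if "(x, b, y) \<in> patchU" for x b y
    using that by (simp add: patchU_def surfaceF_iff one_minus_mem_slot_iff)
  then show "(\<lambda>(x, b, y). (1 + b * x, y)) ` patchU \<subseteq> ?S"
    by force
  have "x \<noteq> 0" if "(x, b, y) \<in> patchU" for x b y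
    using that by (auto simp: patchU_def complex_slot_left_eq)
  then show "(\<lambda>(A, y). (1 - A * y, (A - 1) / (1 - A * y), y)) ((\<lambda>(x, b, y). (1 + b * x, y)) z) = z"
    if "z \<in> patchU" for z
    using that by (auto simp: patchU_def surfaceF_iff)
qed

lemma simply_connected_patchV: "simply_connected patchV"
proof (rule simply_connected_by_right_inverse
    [where h = "\<lambda>(x, b). (x, b, (1 - x) / (1 + b * x))" and k = "\<lambda>(x, b, y). (x, b)"])
  let ?S = "{p :: complex \<times> complex. fst p \<in> - complex_of_real ` {1..} \<and> fst p * snd p \<in> - complex_of_real ` {..-1}}"
  have "(0::complex) \<notin> complex_of_real ` {1..}" "(0::complex) \<notin> complex_of_real ` {..-1}"
    by (auto simp: complex_slot_left_eq complex_slot_right_eq)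
  then have "starlike ?S"
    using starlike_mult_constraint[of "- complex_of_real ` {1..}" "- complex_of_real ` {..-1}"]
      closed_segment_0_subset_slot_right[of 1] closed_segment_0_subset_slot_left[of "-1"] by simp
  then show "simply_connected ?S"
    by (rule starlike_imp_simply_connected)
  have nz: "1 + w \<noteq> 0" if "w \<notin> complex_of_real ` {..-1}" for w
    using that by (auto simp: complex_slot_left_eq add_eq_0_iff)
  show "continuous_on ?S (\<lambda>(x, b). (x, b, (1 - x) / (1 + b * x)))"
    using nz by (auto simp: case_prod_unfold mult.commute intro!: continuous_intros)
  show "continuous_on patchV (\<lambda>(x, b, y). (x, b))"
    by (auto simp: case_prod_unfold intro!: continuous_intros)
  have "(x, b, (1 - x) / (1 + b * x)) \<in> patchV" if "(x, b) \<in> ?S" for x b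
    using that nz[of "x * b"] by (auto simp: patchV_def surfaceF_iff one_plus_mem_slot_iff mult.commute)
  then show "(\<lambda>(x, b). (x, b, (1 - x) / (1 + b * x))) ` ?S \<subseteq> patchV"
    by force
  show "(\<lambda>(x, b, y). (x, b)) ` patchV \<subseteq> ?S"
    by (auto simp: patchV_def one_plus_mem_slot_iff mult.commute)
  have "y = (1 - x) / (1 + b * x)" if "(x, b, y) \<in> patchV" for x b y
    using that nz[of "b * x"]
    by (auto simp: patchV_def surfaceF_iff one_plus_mem_slot_iff field_simps)
  then show "(\<lambda>(x, b). (x, b, (1 - x) / (1 + b * x))) ((\<lambda>(x, b, y). (x, b)) z) = z"
    if "z \<in> patchV" for z
    using that by (cases z) auto
qed

lemma simply_connected_patchW: "simply_connected patchW"
proof (rule simply_connected_by_right_inverse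
    [where h = "\<lambda>(x, y). (x, (1 - x - y) / (x * y), y)" and k = "\<lambda>(x, b, y). (x, y)"])
  let ?S = "(- complex_of_real ` {0..}) \<times> (- complex_of_real ` {0..})"
  show "simply_connected ?S"
    by (intro simply_connected_Times simply_connected_slotted_complex_plane_right)
  have nz: "w \<noteq> 0" if "w \<notin> complex_of_real ` {0..}" for w
    using that by (auto simp: complex_slot_right_eq)
  show "continuous_on ?S (\<lambda>(x, y). (x, (1 - x - y) / (x * y), y))"
    using nz by (auto simp: case_prod_unfold intro!: continuous_intros)
  show "continuous_on patchW (\<lambda>(x, b, y). (x, y))"
    by (auto simp: case_prod_unfold intro!: continuous_intros)
  show "(\<lambda>(x, y). (x, (1 - x - y) / (x * y), y)) ` ?S \<subseteq> patchW"
    using nz by (auto simp: patchW_def surfaceF_iff_mid)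
  show "(\<lambda>(x, b, y). (x, y)) ` patchW \<subseteq> ?S"
    by (auto simp: patchW_def)
  show "(\<lambda>(x, y). (x, (1 - x - y) / (x * y), y)) ((\<lambda>(x, b, y). (x, y)) z) = z"
    if "z \<in> patchW" for z
    using that nz by (auto simp: patchW_def surfaceF_iff_mid)
qed

lemma path_connected_patchU_Int_patchV: "path_connected (patchU \<inter> patchV)"
proof (rule path_connected_by_right_inverse
    [where h = "\<lambda>(x, A). (x, (A - 1) / x, (1 - x) / A)" and k = "\<lambda>(x, b, y). (x, 1 + b * x)"])
  let ?S = "(- complex_of_real ` ({..0} \<union> {1..})) \<times> (- complex_of_real ` {..0})"
  show "path_connected ?S"
    by (intro path_connected_Times simply_connected_imp_path_connected
        simply_connected_doubly_slotted_complex_plane simply_connected_slotted_complex_plane_left) simp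
  have nz: "w \<noteq> 0" if "w \<notin> complex_of_real ` {..0}" for w
    using that by (auto simp: complex_slot_left_eq)
  show "continuous_on ?S (\<lambda>(x, A). (x, (A - 1) / x, (1 - x) / A))"
    using nz by (auto simp: case_prod_unfold intro!: continuous_intros)
  have "(x, (A - 1) / x, (1 - x) / A) \<in> patchU \<inter> patchV" if "(x, A) \<in> ?S" for x A
    using that nz[of x] nz[of A] by (simp add: patchU_def patchV_def surfaceF_iff image_Un)
  then show "(\<lambda>(x, A). (x, (A - 1) / x, (1 - x) / A)) ` ?S \<subseteq> patchU \<inter> patchV"
    by force
  show "(\<lambda>(x, b, y). (x, 1 + b * x)) ` (patchU \<inter> patchV) \<subseteq> ?S"
    by (auto simp: patchU_def patchV_def image_Un)
  have "(x, ((1 + b * x) - 1) / x, (1 - x) / (1 + b * x)) = (x, b, y)"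
    if "(x, b, y) \<in> patchU \<inter> patchV" for x b y
    using that nz[of x] nz[of "1 + b * x"]
    by (auto simp: patchU_def patchV_def surfaceF_iff field_simps)
  then show "(\<lambda>(x, A). (x, (A - 1) / x, (1 - x) / A)) ((\<lambda>(x, b, y). (x, 1 + b * x)) z) = z"
    if "z \<in> patchU \<inter> patchV" for z
    using that by (cases z) auto
qed

lemma patches_Int_patchW:
  "(patchU \<union> patchV) \<inter> patchW = {(x, b, y) \<in> patchW. Im x \<noteq> 0 \<or> Im y \<noteq> 0}"
proof -
  have "(x, b, y) \<in> patchU \<union> patchV \<longleftrightarrow> Im x \<noteq> 0 \<or> Im y \<noteq> 0" if W: "(x, b, y) \<in> patchW" for x b y
  proof (cases "Im x = 0")
    case True
    then have "x \<in> complex_of_real ` {..0}"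
      using W by (auto simp: patchW_def complex_slot_left_eq complex_slot_right_eq)
    then show ?thesis
      using W mem_patchV_if_nonpos_real[of x b y] True
      by (auto simp: patchU_def patchW_def complex_slot_left_eq complex_slot_right_eq)
  next
    case False
    then show ?thesis
      using W by (auto simp: patchU_def patchW_def complex_slot_left_eq)
  qed
  then show ?thesis
    by auto
qed

lemma path_connected_patches_Int_patchW: "path_connected ((patchU \<union> patchV) \<inter> patchW)"
  unfolding patches_Int_patchW
proof (rule path_connected_by_right_inverse
    [where h = "\<lambda>(x, y). (x, (1 - x - y) / (x * y), y)" and k = "\<lambda>(x, b, y). (x, y)"])
  let ?S = "{(x, y). x \<notin> complex_of_real ` {0..} \<and> y \<notin> complex_of_real ` {0..} \<and> (Im x \<noteq> 0 \<or> Im y \<noteq> 0)}"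
  show "path_connected ?S"
    by (rule path_connected_slotted_pairs_not_both_real)
  have nz: "w \<noteq> 0" if "w \<notin> complex_of_real ` {0..}" for w
    using that by (auto simp: complex_slot_right_eq)
  show "continuous_on ?S (\<lambda>(x, y). (x, (1 - x - y) / (x * y), y))"
    using nz by (auto simp: case_prod_unfold intro!: continuous_intros)
  show "(\<lambda>(x, y). (x, (1 - x - y) / (x * y), y)) ` ?S \<subseteq> {(x, b, y) \<in> patchW. Im x \<noteq> 0 \<or> Im y \<noteq> 0}"
    using nz by (auto simp: patchW_def surfaceF_iff_mid)
  show "(\<lambda>(x, b, y). (x, y)) ` {(x, b, y) \<in> patchW. Im x \<noteq> 0 \<or> Im y \<noteq> 0} \<subseteq> ?S"
    by (auto simp: patchW_def)
  show "(\<lambda>(x, y). (x, (1 - x - y) / (x * y), y)) ((\<lambda>(x, b, y). (x, y)) z) = z"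
    if "z \<in> {(x, b, y) \<in> patchW. Im x \<noteq> 0 \<or> Im y \<noteq> 0}" for z
    using that nz by (auto simp: patchW_def surfaceF_iff_mid)
qed

theorem lemma2:
  shows "path_connected surfaceF \<and> simply_connected surfaceF"
proof -
  have "(1/2, 0, 1/2) \<in> patchU \<inter> patchV"
    by (simp add: patchU_def patchV_def surfaceF_iff complex_slot_left_eq complex_slot_right_eq)
  moreover have "openin (top_of_set (patchU \<union> patchV)) patchU" "openin (top_of_set (patchU \<union> patchV)) patchV"
    using openin_patches surfaceF_eq_patches by (auto intro: openin_subset_trans)
  ultimately have "simply_connected (patchU \<union> patchV)"
    using simply_connected_Un simply_connected_patchU simply_connected_patchV
      path_connected_patchU_Int_patchV by blast
  moreover have "(\<i>, -1 + 2 * \<i>, \<i>) \<in> (patchU \<union> patchV) \<inter> patchW"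
    unfolding patches_Int_patchW
    by (simp add: patchW_def surfaceF_iff complex_slot_right_eq algebra_simps)
  moreover have "openin (top_of_set surfaceF) (patchU \<union> patchV)" "openin (top_of_set surfaceF) patchW"
    using openin_patches by auto
  ultimately have "simply_connected surfaceF"
    using simply_connected_Un[of "patchU \<union> patchV" patchW] simply_connected_patchW
      path_connected_patches_Int_patchW surfaceF_eq_patches by fastforce
  then show ?thesis
    by (simp add: simply_connected_imp_path_connected)
qed

end
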